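(* Let $m\in\mathbb{N}$ and $f_1,\dots,f_m\in C[0,1]$. Let $q'=P/Q$, where $P(x)=p(f_1(x),\dots,f_m(x))$ and $Q(x)=q(f_1(x),\dots,f_m(x))$ for real polynomials $p,q$ in $m$ variables, and where $Q(x)\neq0$ for all $x\in[0,1]$. Then $$\overline{\dim}_B G(q')\le \max_{1\le i\le m}\overline{\dim}_B G(f_i).$$
   Context: $C[0,1]$ is the space of real-valued continuous functions on $[0,1]$; $G(h)=\{(x,h(x)):x\in[0,1]\}\subset\mathbb{R}^2$ is the graph of $h$. For a nonempty bounded set $F$, $N_\delta(F)$ is the smallest number of sets of diameter at most $\delta$ covering $F$, and $\overline{\dim}_B F=\limsup_{\delta\to0}\frac{\log N_\delta(F)}{-\log\delta}$. *)

theory Defs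
  imports "HOL-Analysis.Analysis"
begin

definition real_poly_fun :: "nat \<Rightarrow> ((nat \<Rightarrow> real) \<Rightarrow> real) \<Rightarrow> bool" where
  "real_poly_fun m p \<longleftrightarrow>
     (\<exists>A :: (nat \<Rightarrow> nat) set. \<exists>c :: (nat \<Rightarrow> nat) \<Rightarrow> real. finite A \<and>
        (\<forall>y. p y = (\<Sum>\<alpha>\<in>A. c \<alpha> * (\<Prod>i<m. y i ^ \<alpha> i))))"

definition graph01 :: "(real \<Rightarrow> real) \<Rightarrow> (real \<times> real) set" where
  "graph01 h = (\<lambda>x. (x, h x)) ` {0..1}"

definition cover_num :: "real \<Rightarrow> 'a::metric_space set \<Rightarrow> nat" where
  "cover_num \<delta> F = (LEAST n. \<exists>C. finite C \<and> card C = n \<and>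
      (\<forall>S\<in>C. bounded S \<and> diameter S \<le> \<delta>) \<and> F \<subseteq> \<Union>C)"

definition upper_box_dim :: "'a::metric_space set \<Rightarrow> ereal" where
  "upper_box_dim F = Limsup (at_right 0) (\<lambda>\<delta>. ereal (ln (real (cover_num \<delta> F)) / (- ln \<delta>)))"

end

theory Submission
  imports Defs "HOL-Real_Asymp.Real_Asymp"
begin

text \<open>Since \<open>q\<close> does not vanish on \<open>[0,1]\<close>, the quotient \<open>F = P/Q\<close> is Lipschitz with respect
  to \<open>(f\<^sub>1,\<dots>,f\<^sub>m)\<close>: \<open>\<bar>F x - F y\<bar> \<le> L \<Sum>\<^sub>i \<bar>f\<^sub>i x - f\<^sub>i y\<bar>\<close>. Cut \<open>[0,1]\<close> into columns of width
  \<open>\<delta>/2\<close>. The oscillation of a continuous \<open>f\<^sub>i\<close> on a column is at most \<open>2\<delta>\<close> times the number of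
  sets of a minimal \<open>\<delta>\<close>-cover of its graph that meet the graph over that column, and every such
  set meets at most four columns. Summing over the columns, the oscillations of \<open>F\<close> add up to
  \<open>O(\<delta> max\<^sub>i N\<^sub>\<delta>(G(f\<^sub>i)))\<close>, so \<open>G(F)\<close> is covered by \<open>O(max\<^sub>i N\<^sub>\<delta>(G(f\<^sub>i)))\<close> squares of side
  \<open>\<delta>/2\<close>. A constant factor in \<open>N\<^sub>\<delta>\<close> does not change the upper box dimension.\<close>

definition controlled_by :: "nat \<Rightarrow> (nat \<Rightarrow> real \<Rightarrow> real) \<Rightarrow> (real \<Rightarrow> real) \<Rightarrow> bool" where
  "controlled_by m f h \<longleftrightarrow>
     (\<exists>L\<ge>0. \<forall>x\<in>{0..1}. \<forall>y\<in>{0..1}. \<bar>h x - h y\<bar> \<le> L * (\<Sum>i<m. \<bar>f i x - f i y\<bar>))"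

definition bounded_family :: "nat \<Rightarrow> (nat \<Rightarrow> real \<Rightarrow> real) \<Rightarrow> bool" where
  "bounded_family m f \<longleftrightarrow> (\<exists>B. \<forall>i<m. \<forall>x\<in>{0..1}. \<bar>f i x\<bar> \<le> B)"

lemma controlled_byE:
  assumes "controlled_by m f h"
  obtains L where "L \<ge> 0"
    "\<And>x y. x \<in> {0..1} \<Longrightarrow> y \<in> {0..1} \<Longrightarrow> \<bar>h x - h y\<bar> \<le> L * (\<Sum>i<m. \<bar>f i x - f i y\<bar>)"
  using assms unfolding controlled_by_def by blast

lemma bounded_family_continuous:
  assumes "\<And>i. i < m \<Longrightarrow> continuous_on {0..1} (f i)"
  shows "bounded_family m f"
proof -
  have "compact (\<Union>i<m. f i ` {0..1})"
    using assms by (intro compact_UN compact_continuous_image compact_Icc) auto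
  then obtain B where "\<forall>y\<in>(\<Union>i<m. f i ` {0..1}). \<bar>y\<bar> \<le> B"
    using compact_imp_bounded bounded_real by metis
  thus ?thesis unfolding bounded_family_def by auto
qed

lemma controlled_by_bounded:
  assumes "bounded_family m f" "controlled_by m f h"
  obtains B where "B \<ge> 0" "\<And>x. x \<in> {0..1} \<Longrightarrow> \<bar>h x\<bar> \<le> B"
proof -
  obtain Bf where Bf: "\<And>i x. i < m \<Longrightarrow> x \<in> {0..1} \<Longrightarrow> \<bar>f i x\<bar> \<le> Bf"
    using assms(1) unfolding bounded_family_def by blast
  obtain L where L: "L \<ge> 0"
    "\<And>x y. x \<in> {0..1} \<Longrightarrow> y \<in> {0..1} \<Longrightarrow> \<bar>h x - h y\<bar> \<le> L * (\<Sum>i<m. \<bar>f i x - f i y\<bar>)"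
    using assms(2) by (rule controlled_byE) blast
  define B where "B = \<bar>h 0\<bar> + L * (real m * (2 * \<bar>Bf\<bar>))"
  have "B \<ge> 0" using L(1) unfolding B_def by simp
  moreover have "\<bar>h x\<bar> \<le> B" if x: "x \<in> {0..1}" for x
  proof -
    have "(\<Sum>i<m. \<bar>f i x - f i 0\<bar>) \<le> real (card {..<m}) * (2 * \<bar>Bf\<bar>)"
      using Bf[OF _ x] Bf[of _ 0] by (intro sum_bounded_above) (fastforce simp: abs_diff_le_iff)
    hence "L * (\<Sum>i<m. \<bar>f i x - f i 0\<bar>) \<le> L * (real m * (2 * \<bar>Bf\<bar>))"
      using L(1) by (simp add: mult_left_mono)
    thus ?thesis using L(2)[OF x, of 0] unfolding B_def by simp
  qed
  ultimately show ?thesis by (rule that)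
qed

lemma controlled_by_const: "controlled_by m f (\<lambda>x. c)"
  unfolding controlled_by_def by (intro exI[of _ 0]) auto

lemma controlled_by_component: "i < m \<Longrightarrow> controlled_by m f (f i)"
  unfolding controlled_by_def
  by (intro exI[of _ 1]) (auto intro!: member_le_sum[of i "{..<m}" "\<lambda>i. \<bar>f i _ - f i _\<bar>"])

lemma controlled_by_add:
  assumes "controlled_by m f g" "controlled_by m f h"
  shows "controlled_by m f (\<lambda>x. g x + h x)"
proof -
  obtain L1 where L1: "L1 \<ge> 0"
    "\<And>x y. x \<in> {0..1} \<Longrightarrow> y \<in> {0..1} \<Longrightarrow> \<bar>g x - g y\<bar> \<le> L1 * (\<Sum>i<m. \<bar>f i x - f i y\<bar>)"
    using assms(1) by (rule controlled_byE) blast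
  obtain L2 where L2: "L2 \<ge> 0"
    "\<And>x y. x \<in> {0..1} \<Longrightarrow> y \<in> {0..1} \<Longrightarrow> \<bar>h x - h y\<bar> \<le> L2 * (\<Sum>i<m. \<bar>f i x - f i y\<bar>)"
    using assms(2) by (rule controlled_byE) blast
  show ?thesis unfolding controlled_by_def
  proof (intro exI[of _ "L1 + L2"] conjI ballI)
    fix x y :: real assume xy: "x \<in> {0..1}" "y \<in> {0..1}"
    have "\<bar>(g x + h x) - (g y + h y)\<bar> \<le> \<bar>g x - g y\<bar> + \<bar>h x - h y\<bar>" by linarith
    also have "\<dots> \<le> L1 * (\<Sum>i<m. \<bar>f i x - f i y\<bar>) + L2 * (\<Sum>i<m. \<bar>f i x - f i y\<bar>)"
      using L1(2) L2(2) xy by (intro add_mono)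
    finally show "\<bar>(g x + h x) - (g y + h y)\<bar> \<le> (L1 + L2) * (\<Sum>i<m. \<bar>f i x - f i y\<bar>)"
      by (simp add: algebra_simps)
  qed (use L1 L2 in auto)
qed

lemma controlled_by_mult:
  assumes "bounded_family m f" "controlled_by m f g" "controlled_by m f h"
  shows "controlled_by m f (\<lambda>x. g x * h x)"
proof -
  obtain L1 where L1: "L1 \<ge> 0"
    "\<And>x y. x \<in> {0..1} \<Longrightarrow> y \<in> {0..1} \<Longrightarrow> \<bar>g x - g y\<bar> \<le> L1 * (\<Sum>i<m. \<bar>f i x - f i y\<bar>)"
    using assms(2) by (rule controlled_byE) blast
  obtain L2 where L2: "L2 \<ge> 0"
    "\<And>x y. x \<in> {0..1} \<Longrightarrow> y \<in> {0..1} \<Longrightarrow> \<bar>h x - h y\<bar> \<le> L2 * (\<Sum>i<m. \<bar>f i x - f i y\<bar>)"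
    using assms(3) by (rule controlled_byE) blast
  obtain Bg where Bg: "Bg \<ge> 0" "\<And>x. x \<in> {0..1} \<Longrightarrow> \<bar>g x\<bar> \<le> Bg"
    using assms(1,2) by (rule controlled_by_bounded) blast
  obtain Bh where Bh: "Bh \<ge> 0" "\<And>x. x \<in> {0..1} \<Longrightarrow> \<bar>h x\<bar> \<le> Bh"
    using assms(1,3) by (rule controlled_by_bounded) blast
  show ?thesis unfolding controlled_by_def
  proof (intro exI[of _ "Bg * L2 + Bh * L1"] conjI ballI)
    fix x y :: real assume xy: "x \<in> {0..1}" "y \<in> {0..1}"
    let ?S = "\<Sum>i<m. \<bar>f i x - f i y\<bar>"
    have "g x * h x - g y * h y = g x * (h x - h y) + h y * (g x - g y)"
      by (simp add: algebra_simps)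
    hence "\<bar>g x * h x - g y * h y\<bar> \<le> \<bar>g x\<bar> * \<bar>h x - h y\<bar> + \<bar>h y\<bar> * \<bar>g x - g y\<bar>"
      by (metis abs_mult abs_triangle_ineq)
    also have "\<dots> \<le> Bg * (L2 * ?S) + Bh * (L1 * ?S)"
      using L1 L2 Bg Bh xy by (intro add_mono mult_mono) auto
    finally show "\<bar>g x * h x - g y * h y\<bar> \<le> (Bg * L2 + Bh * L1) * ?S"
      by (simp add: algebra_simps)
  qed (use L1 L2 Bg Bh in auto)
qed

lemma controlled_by_sum:
  assumes "finite A" "\<And>a. a \<in> A \<Longrightarrow> controlled_by m f (g a)"
  shows "controlled_by m f (\<lambda>x. \<Sum>a\<in>A. g a x)"
  using assms by (induction A rule: finite_induct) (auto intro: controlled_by_add controlled_by_const)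

lemma controlled_by_prod:
  assumes "bounded_family m f" "finite A" "\<And>a. a \<in> A \<Longrightarrow> controlled_by m f (g a)"
  shows "controlled_by m f (\<lambda>x. \<Prod>a\<in>A. g a x)"
  using assms(2,3)
  by (induction A rule: finite_induct) (auto intro: controlled_by_mult[OF assms(1)] controlled_by_const)

lemma controlled_by_power:
  assumes "bounded_family m f" "controlled_by m f h"
  shows "controlled_by m f (\<lambda>x. h x ^ n)"
  by (induction n) (auto intro: controlled_by_mult[OF assms] controlled_by_const)

lemma controlled_by_inverse:
  assumes "controlled_by m f h" "c > 0" "\<And>x. x \<in> {0..1} \<Longrightarrow> c \<le> \<bar>h x\<bar>"
  shows "controlled_by m f (\<lambda>x. inverse (h x))"
proof -
  obtain L where L: "L \<ge> 0"
    "\<And>x y. x \<in> {0..1} \<Longrightarrow> y \<in> {0..1} \<Longrightarrow> \<bar>h x - h y\<bar> \<le> L * (\<Sum>i<m. \<bar>f i x - f i y\<bar>)"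
    using assms(1) by (rule controlled_byE) blast
  show ?thesis unfolding controlled_by_def
  proof (intro exI[of _ "L / (c * c)"] conjI ballI)
    fix x y :: real assume xy: "x \<in> {0..1}" "y \<in> {0..1}"
    have hx: "c \<le> \<bar>h x\<bar>" and hy: "c \<le> \<bar>h y\<bar>" using assms(3) xy by auto
    hence "h x \<noteq> 0" "h y \<noteq> 0" using assms(2) by auto
    hence "\<bar>inverse (h x) - inverse (h y)\<bar> = \<bar>h x - h y\<bar> / (\<bar>h x\<bar> * \<bar>h y\<bar>)"
      by (simp add: field_simps abs_mult abs_minus_commute)
    also have "\<dots> \<le> \<bar>h x - h y\<bar> / (c * c)"
      using hx hy assms(2) by (intro divide_left_mono mult_mono) auto
    also have "\<dots> \<le> L * (\<Sum>i<m. \<bar>f i x - f i y\<bar>) / (c * c)"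
      using L(2)[OF xy] by (intro divide_right_mono) auto
    finally show "\<bar>inverse (h x) - inverse (h y)\<bar> \<le> L / (c * c) * (\<Sum>i<m. \<bar>f i x - f i y\<bar>)"
      by simp
  qed (use L assms(2) in auto)
qed

lemma controlled_by_real_poly_fun:
  assumes "bounded_family m f" "real_poly_fun m p"
  shows "controlled_by m f (\<lambda>x. p (\<lambda>i. f i x))"
proof -
  obtain A c where "finite A" and p: "\<And>y. p y = (\<Sum>\<alpha>\<in>A. c \<alpha> * (\<Prod>i<m. y i ^ \<alpha> i))"
    using assms(2) unfolding real_poly_fun_def by blast
  have "controlled_by m f (\<lambda>x. \<Sum>\<alpha>\<in>A. c \<alpha> * (\<Prod>i<m. f i x ^ \<alpha> i))"
    by (intro controlled_by_sum \<open>finite A\<close> controlled_by_mult[OF assms(1)] controlled_by_const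
        controlled_by_prod[OF assms(1)] controlled_by_power[OF assms(1)] controlled_by_component) auto
  thus ?thesis by (simp add: p)
qed

lemma continuous_on_real_poly_fun:
  assumes "real_poly_fun m p" "\<And>i. i < m \<Longrightarrow> continuous_on {0..1} (f i)"
  shows "continuous_on {0..1} (\<lambda>x. p (\<lambda>i. f i x))"
proof -
  obtain A c where p: "\<And>y. p y = (\<Sum>\<alpha>\<in>A. c \<alpha> * (\<Prod>i<m. y i ^ \<alpha> i))"
    using assms(1) unfolding real_poly_fun_def by blast
  show ?thesis unfolding p by (intro continuous_intros) (auto intro: assms(2))
qed

lemma controlled_by_real_poly_fun_quotient:
  assumes "\<And>i. i < m \<Longrightarrow> continuous_on {0..1} (f i)"
    and "real_poly_fun m p" "real_poly_fun m q"
    and "\<And>x. x \<in> {0..1} \<Longrightarrow> q (\<lambda>i. f i x) \<noteq> 0"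
  shows "controlled_by m f (\<lambda>x. p (\<lambda>i. f i x) / q (\<lambda>i. f i x))"
proof -
  have bf: "bounded_family m f" using assms(1) by (rule bounded_family_continuous)
  have cont: "continuous_on {0..1} (\<lambda>x. \<bar>q (\<lambda>i. f i x)\<bar>)"
    using continuous_on_real_poly_fun[OF assms(3,1)] by (rule continuous_on_rabs)
  obtain x0 where x0: "x0 \<in> {0..1}" "\<And>y. y \<in> {0..1} \<Longrightarrow> \<bar>q (\<lambda>i. f i x0)\<bar> \<le> \<bar>q (\<lambda>i. f i y)\<bar>"
    using continuous_attains_inf[OF compact_Icc _ cont] by auto
  have "controlled_by m f (\<lambda>x. inverse (q (\<lambda>i. f i x)))"
    by (rule controlled_by_inverse[OF controlled_by_real_poly_fun[OF bf assms(3)], of "\<bar>q (\<lambda>i. f i x0)\<bar>"])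
      (use assms(4)[OF x0(1)] x0(2) in auto)
  hence "controlled_by m f (\<lambda>x. p (\<lambda>i. f i x) * inverse (q (\<lambda>i. f i x)))"
    by (intro controlled_by_mult[OF bf] controlled_by_real_poly_fun[OF bf assms(2)])
  thus ?thesis by (simp add: divide_inverse)
qed

definition delta_cover :: "real \<Rightarrow> 'a::metric_space set \<Rightarrow> 'a set set \<Rightarrow> bool" where
  "delta_cover \<delta> F C \<longleftrightarrow> finite C \<and> (\<forall>S\<in>C. bounded S \<and> diameter S \<le> \<delta>) \<and> F \<subseteq> \<Union>C"

lemma cover_num_le_card: "delta_cover \<delta> F C \<Longrightarrow> cover_num \<delta> F \<le> card C"
  unfolding cover_num_def delta_cover_def by (rule Least_le) blast

lemma cover_num_attained:
  fixes F :: "'a::euclidean_space set"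
  assumes "compact F" "\<delta> > 0"
  shows "\<exists>C. delta_cover \<delta> F C \<and> card C = cover_num \<delta> F"
proof -
  have "F \<subseteq> (\<Union>c\<in>F. ball c (\<delta>/2))" using assms(2) by auto
  then obtain K where K: "finite K" "F \<subseteq> (\<Union>c\<in>K. ball c (\<delta>/2))"
    by (rule compactE_image[OF assms(1) open_ball])
  have "\<forall>S\<in>(\<lambda>c. ball c (\<delta>/2)) ` K. bounded S \<and> diameter S \<le> \<delta>"
    using assms(2) by simp
  hence "\<exists>n C. finite C \<and> card C = n \<and> (\<forall>S\<in>C. bounded S \<and> diameter S \<le> \<delta>) \<and> F \<subseteq> \<Union>C"
    using K by blast
  from LeastI_ex[OF this, folded cover_num_def] show ?thesis unfolding delta_cover_def by blast
qed

lemma compact_graph01: "continuous_on {0..1} g \<Longrightarrow> compact (graph01 g)"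
  unfolding graph01_def by (intro compact_continuous_image continuous_on_Pair continuous_on_id) auto

lemma interval_length_le_card_cover:
  fixes c :: "'s \<Rightarrow> real"
  assumes "finite J" "{a..b} \<subseteq> (\<Union>S\<in>J. {c S - r .. c S + r})" "a \<le> b" "r \<ge> 0"
  shows "b - a \<le> 2 * r * card J"
proof -
  have "b - a = measure lborel {a..b}" using assms by simp
  also have "\<dots> \<le> measure lborel (\<Union>S\<in>J. {c S - r .. c S + r})"
    by (rule measure_mono_fmeasurable) (use assms in \<open>auto intro!: fmeasurable_compact\<close>)
  also have "\<dots> \<le> (\<Sum>S\<in>J. measure lborel {c S - r .. c S + r})"
    by (rule measure_UNION_le) (use assms in auto)
  also have "\<dots> = 2 * r * card J" using assms by simp
  finally show ?thesis .
qed

lemma card_le_4_if_spread_le_3: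
  assumes "finite K" "\<And>k j. k \<in> K \<Longrightarrow> j \<in> K \<Longrightarrow> k \<le> j + (3::nat)"
  shows "card K \<le> 4"
proof (cases "K = {}")
  case False
  have "K \<subseteq> {Min K .. Min K + 3}"
    using assms False Min_le Min_in by fastforce
  hence "card K \<le> card {Min K .. Min K + 3}" by (rule card_mono[rotated]) simp
  thus ?thesis by simp
qed simp

definition column :: "real \<Rightarrow> nat \<Rightarrow> real set" where
  "column \<delta> k = {real k * (\<delta>/2) .. real (Suc k) * (\<delta>/2)} \<inter> {0..1}"

definition num_columns :: "real \<Rightarrow> nat" where
  "num_columns \<delta> = nat \<lceil>2/\<delta>\<rceil>"

definition column_hits ::
    "(real \<times> real) set set \<Rightarrow> (real \<Rightarrow> real) \<Rightarrow> real \<Rightarrow> nat \<Rightarrow> (real \<times> real) set set" where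
  "column_hits C g \<delta> k = {S\<in>C. S \<inter> (\<lambda>x. (x, g x)) ` column \<delta> k \<noteq> {}}"

lemma column_subset: "column \<delta> k \<subseteq> {0..1}"
  unfolding column_def by auto

lemma connected_column: "connected (column \<delta> k)"
  unfolding column_def by (simp add: Int_atLeastAtMost)

lemma left_endpoint_in_column:
  assumes "\<delta> > 0" "k < num_columns \<delta>"
  shows "real k * (\<delta>/2) \<in> column \<delta> k"
proof -
  have "real k < 2/\<delta>" using assms unfolding num_columns_def by linarith
  hence "real k * (\<delta>/2) < 1" using assms by (simp add: field_simps)
  thus ?thesis using assms unfolding column_def by auto
qed

lemma exists_column:
  assumes "\<delta> > 0" "x \<in> {0..1}"
  obtains k where "k < num_columns \<delta>" "x \<in> column \<delta> k"
proof -
  define w where "w = \<delta>/2"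
  define n where "n = num_columns \<delta>"
  have w: "w > 0" and n: "real n \<ge> 1/w" "n \<ge> 1"
    using assms unfolding n_def num_columns_def w_def by (auto simp: Suc_le_eq)
  show ?thesis
  proof (cases "nat \<lfloor>x/w\<rfloor> < n")
    case True
    let ?k = "nat \<lfloor>x/w\<rfloor>"
    have "real ?k \<le> x/w" "x/w < real ?k + 1" using assms w by auto
    hence "real ?k * w \<le> x" "x \<le> real (Suc ?k) * w" using w by (auto simp: field_simps)
    thus ?thesis using True assms that unfolding column_def n_def w_def by auto
  next
    case False
    \<comment> \<open>then \<open>x = 1\<close> lies at the right end of the last column\<close>
    have "real (nat \<lfloor>x/w\<rfloor>) \<le> x/w" using assms w by simp
    hence "real n \<le> x/w" using False by linarith
    hence "x \<ge> n * w" using w by (simp add: field_simps)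
    moreover have "n * w \<ge> 1" using n w by (simp add: field_simps)
    ultimately have x1: "x = 1" "n * w = 1" using assms by auto
    have "real (n - 1) * w \<le> 1" "real (Suc (n - 1)) * w = 1"
      using n x1 w by (simp_all add: of_nat_diff algebra_simps)
    hence "x \<in> column \<delta> (n - 1)" using x1 unfolding column_def w_def by auto
    moreover have "n - 1 < num_columns \<delta>" using n unfolding n_def by simp
    ultimately show ?thesis by (rule that[rotated])
  qed
qed

lemma oscillation_on_column_le:
  assumes "\<delta> > 0" "continuous_on {0..1} g" "delta_cover \<delta> (graph01 g) C"
    "x \<in> column \<delta> k" "y \<in> column \<delta> k"
  shows "\<bar>g x - g y\<bar> \<le> 2 * \<delta> * card (column_hits C g \<delta> k)"
proof -
  have C: "finite C" "\<forall>S\<in>C. bounded S \<and> diameter S \<le> \<delta>" "graph01 g \<subseteq> \<Union>C"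
    using assms(3) unfolding delta_cover_def by auto
  let ?J = "column_hits C g \<delta> k"
  define c where "c S = snd (SOME s. s \<in> S)" for S :: "(real \<times> real) set"
  have cover: "g ` column \<delta> k \<subseteq> (\<Union>S\<in>?J. {c S - \<delta> .. c S + \<delta>})"
  proof
    fix t assume "t \<in> g ` column \<delta> k"
    then obtain z where z: "z \<in> column \<delta> k" "t = g z" by auto
    have "(z, g z) \<in> graph01 g" using z column_subset unfolding graph01_def by auto
    then obtain S where S: "S \<in> C" "(z, g z) \<in> S" using C(3) by auto
    hence SJ: "S \<in> ?J" using z unfolding column_hits_def by auto
    have s0: "(SOME s. s \<in> S) \<in> S" using S by (meson someI)
    have "dist (z, g z) (SOME s. s \<in> S) \<le> diameter S"
      by (rule diameter_bounded_bound) (use S s0 C(2) in auto)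
    hence "dist (g z) (c S) \<le> \<delta>" unfolding c_def
      using dist_snd_le[of "(z, g z)" "SOME s. s \<in> S"] S C(2) by force
    hence "t \<in> {c S - \<delta> .. c S + \<delta>}" using z by (auto simp: dist_real_def)
    thus "t \<in> (\<Union>S\<in>?J. {c S - \<delta> .. c S + \<delta>})" using SJ by blast
  qed
  have conn: "connected (g ` column \<delta> k)"
    by (rule connected_continuous_image[OF continuous_on_subset[OF assms(2) column_subset] connected_column])
  have osc: "g v - g u \<le> 2 * \<delta> * card ?J"
    if "u \<in> column \<delta> k" "v \<in> column \<delta> k" "g u \<le> g v" for u v
  proof (rule interval_length_le_card_cover)
    have "{g u .. g v} \<subseteq> g ` column \<delta> k"
      by (rule connected_contains_Icc[OF conn]) (use that in auto)
    thus "{g u .. g v} \<subseteq> (\<Union>S\<in>?J. {c S - \<delta> .. c S + \<delta>})"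
      using cover by (rule order_trans)
  qed (use assms(1) C(1) that in \<open>auto simp: column_hits_def\<close>)
  show ?thesis
  proof (cases "g x \<le> g y")
    case True
    thus ?thesis using osc[of x y] assms(4,5) by simp
  next
    case False
    thus ?thesis using osc[of y x] assms(4,5) by simp
  qed
qed

lemma card_column_hits_ge_1:
  assumes "\<delta> > 0" "k < num_columns \<delta>" "delta_cover \<delta> (graph01 g) C"
  shows "card (column_hits C g \<delta> k) \<ge> 1"
proof -
  let ?z = "real k * (\<delta>/2)"
  have z: "?z \<in> column \<delta> k" by (rule left_endpoint_in_column[OF assms(1,2)])
  hence "(?z, g ?z) \<in> graph01 g" using column_subset unfolding graph01_def by auto
  then obtain S where "S \<in> C" "(?z, g ?z) \<in> S" using assms(3) unfolding delta_cover_def by auto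
  hence "column_hits C g \<delta> k \<noteq> {}" using z unfolding column_hits_def by auto
  moreover have "finite (column_hits C g \<delta> k)"
    using assms(3) unfolding column_hits_def delta_cover_def by auto
  ultimately show ?thesis by (simp add: Suc_le_eq card_gt_0_iff)
qed

lemma column_hits_indices_close:
  assumes "\<delta> > 0" "bounded S" "diameter S \<le> \<delta>"
    "S \<inter> (\<lambda>x. (x, g x)) ` column \<delta> k \<noteq> {}" "S \<inter> (\<lambda>x. (x, g x)) ` column \<delta> j \<noteq> {}"
  shows "k \<le> j + 3"
proof -
  obtain x where x: "x \<in> column \<delta> k" "(x, g x) \<in> S" using assms(4) by auto
  obtain y where y: "y \<in> column \<delta> j" "(y, g y) \<in> S" using assms(5) by auto
  have "dist (x, g x) (y, g y) \<le> \<delta>"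
    using diameter_bounded_bound[OF assms(2) x(2) y(2)] assms(3) by linarith
  hence "\<bar>x - y\<bar> \<le> \<delta>" using dist_fst_le[of "(x, g x)" "(y, g y)"] by (simp add: dist_real_def)
  moreover have "x \<ge> real k * (\<delta>/2)" "y \<le> real (Suc j) * (\<delta>/2)"
    using x y unfolding column_def by auto
  ultimately have "real k * (\<delta>/2) \<le> (real j + 3) * (\<delta>/2)" by (simp add: algebra_simps)
  hence "real k \<le> real j + 3" using assms(1) by (simp add: mult_le_cancel_right)
  thus ?thesis by linarith
qed

lemma sum_card_column_hits_le:
  assumes "\<delta> > 0" "delta_cover \<delta> F C"
  shows "(\<Sum>k<num_columns \<delta>. card (column_hits C g \<delta> k)) \<le> 4 * card C"
proof -
  have C: "finite C" "\<forall>S\<in>C. bounded S \<and> diameter S \<le> \<delta>"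
    using assms(2) unfolding delta_cover_def by auto
  let ?P = "\<lambda>S k. S \<inter> (\<lambda>x. (x, g x)) ` column \<delta> k \<noteq> {}"
  have "(\<Sum>k<num_columns \<delta>. card (column_hits C g \<delta> k))
      = (\<Sum>k<num_columns \<delta>. \<Sum>S\<in>C. if ?P S k then 1 else 0)"
    using C(1) by (simp add: column_hits_def sum.inter_filter[symmetric])
  also have "\<dots> = (\<Sum>S\<in>C. card {k\<in>{..<num_columns \<delta>}. ?P S k})"
    by (subst sum.swap) (simp add: sum.inter_filter[symmetric])
  also have "\<dots> \<le> (\<Sum>S\<in>C. 4)"
  proof (rule sum_mono)
    fix S assume "S \<in> C"
    show "card {k\<in>{..<num_columns \<delta>}. ?P S k} \<le> 4"
    proof (rule card_le_4_if_spread_le_3)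
      fix k j assume "k \<in> {k\<in>{..<num_columns \<delta>}. ?P S k}" "j \<in> {k\<in>{..<num_columns \<delta>}. ?P S k}"
      thus "k \<le> j + 3" using column_hits_indices_close[OF assms(1), of S g k j] \<open>S \<in> C\<close> C(2) by auto
    qed simp
  qed
  finally show ?thesis by simp
qed

lemma diameter_column_box_le:
  assumes "\<delta> > 0"
  shows "diameter (column \<delta> k \<times> {a .. a + \<delta>/2}) \<le> \<delta>"
proof (rule diameter_le)
  fix u v assume "u \<in> column \<delta> k \<times> {a .. a + \<delta>/2}" "v \<in> column \<delta> k \<times> {a .. a + \<delta>/2}"
  hence "fst u \<in> column \<delta> k" "fst v \<in> column \<delta> k" "snd u \<in> {a .. a + \<delta>/2}" "snd v \<in> {a .. a + \<delta>/2}"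
    by (auto simp: mem_Times_iff)
  hence "\<bar>fst u - fst v\<bar> \<le> \<delta>/2" "\<bar>snd u - snd v\<bar> \<le> \<delta>/2"
    unfolding column_def abs_le_iff by (auto simp: algebra_simps)
  moreover have "norm (u - v) \<le> \<bar>fst u - fst v\<bar> + \<bar>snd u - snd v\<bar>"
    using norm_Pair_le[of "fst u - fst v" "snd u - snd v"] by (cases u; cases v) simp
  ultimately show "norm (u - v) \<le> \<delta>" by linarith
qed (use assms in simp)

lemma graph_cover_by_column_boxes:
  assumes "\<delta> > 0" "\<And>k. k < num_columns \<delta> \<Longrightarrow> R k \<ge> 0"
    "\<And>k x. k < num_columns \<delta> \<Longrightarrow> x \<in> column \<delta> k \<Longrightarrow> \<bar>h x - h (real k * (\<delta>/2))\<bar> \<le> R k"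
  obtains C where "delta_cover \<delta> (graph01 h) C" "real (card C) \<le> (\<Sum>k<num_columns \<delta>. 4 * R k / \<delta> + 2)"
proof -
  define w where "w = \<delta>/2"
  have w: "w > 0" using assms(1) w_def by simp
  \<comment> \<open>column \<open>k\<close> is covered by \<open>M k\<close> stacked boxes of height \<open>w\<close> starting at \<open>c k\<close>\<close>
  define c where "c k = h (real k * w) - R k" for k
  define M where "M k = nat \<lceil>2 * R k / w\<rceil> + 1" for k
  define B where "B k j = column \<delta> k \<times> {c k + real j * w .. c k + real j * w + w}" for k j :: nat
  define C where "C = (\<Union>k<num_columns \<delta>. B k ` {..<M k})"
  have "finite C" unfolding C_def by auto
  moreover have "\<forall>S\<in>C. bounded S \<and> diameter S \<le> \<delta>"
  proof
    fix S assume "S \<in> C"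
    then obtain k j where S: "S = B k j" unfolding C_def by auto
    have "bounded (column \<delta> k)" by (rule bounded_subset[OF _ column_subset]) simp
    hence "bounded S" unfolding S B_def by (intro bounded_Times) auto
    moreover have "diameter S \<le> \<delta>"
      unfolding S B_def w_def using diameter_column_box_le[OF assms(1)] by simp
    ultimately show "bounded S \<and> diameter S \<le> \<delta>" by blast
  qed
  moreover have "graph01 h \<subseteq> \<Union>C"
  proof
    fix p assume "p \<in> graph01 h"
    then obtain x where x: "x \<in> {0..1}" "p = (x, h x)" unfolding graph01_def by auto
    obtain k where k: "k < num_columns \<delta>" "x \<in> column \<delta> k"
      using exists_column[OF assms(1) x(1)] by blast
    have "\<bar>h x - h (real k * w)\<bar> \<le> R k" using assms(3)[OF k] unfolding w_def .
    hence hc: "0 \<le> h x - c k" "h x - c k \<le> 2 * R k" unfolding c_def by linarith+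
    define t where "t = (h x - c k) / w"
    have t: "0 \<le> t" "t \<le> 2 * R k / w"
      using hc w unfolding t_def by (auto intro: divide_right_mono)
    define j where "j = nat \<lfloor>t\<rfloor>"
    have j: "real j \<le> t" "t < real j + 1" using t unfolding j_def by linarith+
    hence "j < M k" using t unfolding M_def by linarith
    moreover have "c k + real j * w \<le> h x" "h x \<le> c k + real j * w + w"
      using j w unfolding t_def by (auto simp: field_simps)
    ultimately have "p \<in> B k j" using x k unfolding B_def by auto
    thus "p \<in> \<Union>C" using k \<open>j < M k\<close> unfolding C_def by blast
  qed
  ultimately have "delta_cover \<delta> (graph01 h) C" unfolding delta_cover_def by blast
  moreover have "real (card C) \<le> (\<Sum>k<num_columns \<delta>. 4 * R k / \<delta> + 2)"
  proof -
    have "card C \<le> (\<Sum>k<num_columns \<delta>. card (B k ` {..<M k}))"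
      unfolding C_def by (rule card_UN_le) simp
    also have "\<dots> \<le> (\<Sum>k<num_columns \<delta>. M k)"
      by (intro sum_mono order.trans[OF card_image_le]) simp_all
    finally have "real (card C) \<le> (\<Sum>k<num_columns \<delta>. real (M k))"
      by (simp flip: of_nat_sum)
    also have "\<dots> \<le> (\<Sum>k<num_columns \<delta>. 4 * R k / \<delta> + 2)"
    proof (rule sum_mono)
      fix k assume "k \<in> {..<num_columns \<delta>}"
      hence "R k \<ge> 0" using assms(2) by simp
      hence "real (M k) \<le> 2 * R k / w + 2" unfolding M_def using w by (simp add: of_nat_nat) linarith
      thus "real (M k) \<le> 4 * R k / \<delta> + 2" unfolding w_def by simp
    qed
    finally show ?thesis .
  qed
  ultimately show ?thesis by (rule that)
qed

lemma sum_column_box_counts_le: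
  fixes cnt :: "nat \<Rightarrow> nat \<Rightarrow> nat"
  assumes "m > 0" "L \<ge> 0" "\<And>i. i < m \<Longrightarrow> (\<Sum>k<n. cnt i k) \<le> 4 * N"
    "\<And>k. k < n \<Longrightarrow> cnt 0 k \<ge> 1"
  shows "(\<Sum>k<n. 8 * L * (\<Sum>i<m. real (cnt i k)) + 2) \<le> (32 * L * real m + 8) * real N"
proof -
  have n: "real n \<le> 4 * real N"
  proof -
    have "n \<le> (\<Sum>k<n. cnt 0 k)" using assms(4) sum_mono[of "{..<n}" "\<lambda>_. 1::nat"] by simp
    also have "\<dots> \<le> 4 * N" using assms(1,3) by simp
    finally show ?thesis by linarith
  qed
  have row: "real (\<Sum>k<n. cnt i k) \<le> 4 * real N" if "i \<in> {..<m}" for i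
    using of_nat_mono[OF assms(3)] that by simp
  have "(\<Sum>k<n. 8 * L * (\<Sum>i<m. real (cnt i k)) + 2) = 8 * L * (\<Sum>i<m. real (\<Sum>k<n. cnt i k)) + 2 * real n"
    by (simp add: sum.distrib sum_distrib_left[symmetric] sum.swap[of _ "{..<n}"])
  also have "\<dots> \<le> 8 * L * (\<Sum>i<m. 4 * real N) + 2 * (4 * real N)"
    using assms(2) n row by (intro add_mono mult_left_mono sum_mono) auto
  also have "\<dots> = (32 * L * real m + 8) * real N" by (simp add: algebra_simps)
  finally show ?thesis .
qed

lemma cover_num_graph_controlled_le:
  fixes f :: "nat \<Rightarrow> real \<Rightarrow> real" and F :: "real \<Rightarrow> real"
  assumes "m > 0" "\<And>i. i < m \<Longrightarrow> continuous_on {0..1} (f i)" "L \<ge> 0"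
    "\<And>x y. x \<in> {0..1} \<Longrightarrow> y \<in> {0..1} \<Longrightarrow> \<bar>F x - F y\<bar> \<le> L * (\<Sum>i<m. \<bar>f i x - f i y\<bar>)"
    "\<delta> > 0"
  shows "real (cover_num \<delta> (graph01 F))
      \<le> (32 * L * real m + 8) * real (Max ((\<lambda>i. cover_num \<delta> (graph01 (f i))) ` {..<m}))"
proof -
  define n where "n = num_columns \<delta>"
  define N where "N = Max ((\<lambda>i. cover_num \<delta> (graph01 (f i))) ` {..<m})"
  have "\<exists>C. delta_cover \<delta> (graph01 (f i)) C \<and> card C = cover_num \<delta> (graph01 (f i))" if "i < m" for i
    by (rule cover_num_attained[OF compact_graph01[OF assms(2)[OF that]] assms(5)])
  hence "\<forall>i. \<exists>C. i < m \<longrightarrow> delta_cover \<delta> (graph01 (f i)) C \<and> card C = cover_num \<delta> (graph01 (f i))"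
    by blast
  from choice[OF this] obtain CC where
    "\<forall>i. i < m \<longrightarrow> delta_cover \<delta> (graph01 (f i)) (CC i) \<and> card (CC i) = cover_num \<delta> (graph01 (f i))"
    by blast
  hence CC: "\<And>i. i < m \<Longrightarrow> delta_cover \<delta> (graph01 (f i)) (CC i)"
    "\<And>i. i < m \<Longrightarrow> card (CC i) = cover_num \<delta> (graph01 (f i))"
    by auto
  define cnt where "cnt i k = card (column_hits (CC i) (f i) \<delta> k)" for i k
  define R where "R k = 2 * \<delta> * L * (\<Sum>i<m. real (cnt i k))" for k
  have "\<bar>F x - F (real k * (\<delta>/2))\<bar> \<le> R k" if k: "k < n" and x: "x \<in> column \<delta> k" for k x
  proof -
    have z: "real k * (\<delta>/2) \<in> column \<delta> k"
      using left_endpoint_in_column[OF assms(5)] k unfolding n_def by blast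
    hence "\<bar>F x - F (real k * (\<delta>/2))\<bar> \<le> L * (\<Sum>i<m. \<bar>f i x - f i (real k * (\<delta>/2))\<bar>)"
      using assms(4) x column_subset by blast
    also have "\<dots> \<le> L * (\<Sum>i<m. 2 * \<delta> * real (cnt i k))" unfolding cnt_def
      using assms(3) oscillation_on_column_le[OF assms(5,2) CC(1) x z]
      by (intro mult_left_mono sum_mono) auto
    also have "\<dots> = R k" unfolding R_def by (simp add: sum_distrib_left[symmetric])
    finally show ?thesis .
  qed
  moreover have "R k \<ge> 0" for k
    unfolding R_def using assms(3,5) by (intro mult_nonneg_nonneg sum_nonneg) auto
  ultimately obtain C where C: "delta_cover \<delta> (graph01 F) C" "real (card C) \<le> (\<Sum>k<n. 4 * R k / \<delta> + 2)"
    using graph_cover_by_column_boxes[OF assms(5), of R F] unfolding n_def by blast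
  have "real (cover_num \<delta> (graph01 F)) \<le> (\<Sum>k<n. 4 * R k / \<delta> + 2)"
    using cover_num_le_card[OF C(1)] C(2) by linarith
  also have "\<dots> = (\<Sum>k<n. 8 * L * (\<Sum>i<m. real (cnt i k)) + 2)"
    unfolding R_def using assms(5) by (simp add: mult.assoc)
  also have "\<dots> \<le> (32 * L * real m + 8) * real N"
  proof (rule sum_column_box_counts_le[OF assms(1,3)])
    fix i assume i: "i < m"
    have "(\<Sum>k<n. cnt i k) \<le> 4 * card (CC i)"
      unfolding cnt_def n_def by (rule sum_card_column_hits_le[OF assms(5) CC(1)[OF i]])
    also have "card (CC i) \<le> N" unfolding CC(2)[OF i] N_def using i by simp
    finally show "(\<Sum>k<n. cnt i k) \<le> 4 * N" by simp
  next
    fix k assume "k < n"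
    thus "cnt 0 k \<ge> 1" unfolding cnt_def n_def
      using card_column_hits_ge_1[OF assms(5) _ CC(1)] assms(1) by blast
  qed
  finally show ?thesis unfolding N_def .
qed

lemma Limsup_le_Max_Limsup:
  fixes a :: "'i \<Rightarrow> 'x \<Rightarrow> real" and b e :: "'x \<Rightarrow> real"
  assumes "finite I" "I \<noteq> {}" "(e \<longlongrightarrow> 0) F"
    "eventually (\<lambda>x. \<exists>i\<in>I. b x \<le> e x + a i x) F"
  shows "Limsup F (\<lambda>x. ereal (b x)) \<le> Max ((\<lambda>i. Limsup F (\<lambda>x. ereal (a i x))) ` I)"
    (is "?L \<le> ?M")
proof (rule dense_ge)
  fix y assume "?M < y"
  show "?L \<le> y"
  proof (cases y)
    case (real z)
    obtain s where s: "?M < ereal s" "ereal s < ereal z" using \<open>?M < y\<close> real ereal_dense2 by blast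
    have ev: "eventually (\<lambda>x. ereal (a i x) < ereal s) F" if "i \<in> I" for i
    proof (rule Limsup_lessD)
      show "Limsup F (\<lambda>x. ereal (a i x)) < ereal s"
        using Max_ge[OF _ imageI[OF that]] assms(1) s(1) by (meson finite_imageI order.strict_trans1)
    qed
    have "eventually (\<lambda>x. \<forall>i\<in>I. a i x < s) F"
      using ev by (auto intro!: eventually_ball_finite[OF assms(1)])
    moreover have "eventually (\<lambda>x. e x < z - s) F"
      using order_tendstoD(2)[OF assms(3)] s(2) by simp
    ultimately have "eventually (\<lambda>x. ereal (b x) \<le> ereal z) F"
      using assms(4) by eventually_elim fastforce
    thus ?thesis unfolding real by (rule Limsup_bounded)
  qed (use \<open>?M < y\<close> in auto)
qed

lemma ln_le_ln_add_ln_of_nat: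
  assumes "real n \<le> K * real N" "K \<ge> 1"
  shows "ln (real n) \<le> ln K + ln (real N)"
proof (cases "n = 0")
  case True
  \<comment> \<open>\<open>ln 0 = 0\<close> in Isabelle\<close>
  thus ?thesis using assms(2) by (cases "N = 0") simp_all
next
  case False
  hence "N > 0" using assms by (auto intro: ccontr)
  hence "ln (real n) \<le> ln (K * real N)" using False assms(1) by simp
  also have "\<dots> = ln K + ln (real N)" using \<open>N > 0\<close> assms(2) by (simp add: ln_mult)
  finally show ?thesis .
qed

lemma upper_box_dim_le_Max_if_cover_num_le:
  fixes F :: "'a::metric_space set" and G :: "'i \<Rightarrow> 'a set"
  assumes "finite I" "I \<noteq> {}" "K \<ge> 1"
    "\<And>\<delta>. \<delta> > 0 \<Longrightarrow> real (cover_num \<delta> F) \<le> K * real (Max ((\<lambda>i. cover_num \<delta> (G i)) ` I))"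
  shows "upper_box_dim F \<le> Max ((\<lambda>i. upper_box_dim (G i)) ` I)"
  unfolding upper_box_dim_def
proof (rule Limsup_le_Max_Limsup[OF assms(1,2)])
  show "((\<lambda>\<delta>. ln K / (- ln \<delta>)) \<longlongrightarrow> 0) (at_right 0)" by real_asymp
  have "\<exists>i\<in>I. ln (real (cover_num \<delta> F)) / - ln \<delta>
      \<le> ln K / - ln \<delta> + ln (real (cover_num \<delta> (G i))) / - ln \<delta>" if "\<delta> \<in> {0<..<1}" for \<delta>
  proof -
    have "Max ((\<lambda>i. cover_num \<delta> (G i)) ` I) \<in> (\<lambda>i. cover_num \<delta> (G i)) ` I"
      using assms(1,2) by (intro Max_in) auto
    then obtain i where i: "i \<in> I" "Max ((\<lambda>i. cover_num \<delta> (G i)) ` I) = cover_num \<delta> (G i)"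
      by blast
    have "real (cover_num \<delta> F) \<le> K * real (cover_num \<delta> (G i))"
      using assms(4)[of \<delta>] i(2) that by simp
    hence "ln (real (cover_num \<delta> F)) \<le> ln K + ln (real (cover_num \<delta> (G i)))"
      using assms(3) by (rule ln_le_ln_add_ln_of_nat)
    hence "ln (real (cover_num \<delta> F)) / - ln \<delta> \<le> (ln K + ln (real (cover_num \<delta> (G i)))) / - ln \<delta>"
      using that by (intro divide_right_mono) auto
    thus ?thesis using i(1) by (auto simp: add_divide_distrib)
  qed
  thus "eventually (\<lambda>\<delta>. \<exists>i\<in>I. ln (real (cover_num \<delta> F)) / - ln \<delta>
      \<le> ln K / - ln \<delta> + ln (real (cover_num \<delta> (G i))) / - ln \<delta>) (at_right 0)"
    using eventually_at_right_real[of 0 1] by (auto elim: eventually_mono)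
qed

theorem mainTheorem10:
  fixes m :: nat and f :: "nat \<Rightarrow> real \<Rightarrow> real"
    and p q :: "(nat \<Rightarrow> real) \<Rightarrow> real"
  assumes "m \<ge> 1"
    and "\<And>i. i < m \<Longrightarrow> continuous_on {0..1} (f i)"
    and "real_poly_fun m p" and "real_poly_fun m q"
    and "\<And>x. x \<in> {0..1} \<Longrightarrow> q (\<lambda>i. f i x) \<noteq> 0"
  shows "upper_box_dim (graph01 (\<lambda>x. p (\<lambda>i. f i x) / q (\<lambda>i. f i x)))
           \<le> Max ((\<lambda>i. upper_box_dim (graph01 (f i))) ` {..<m})"
proof -
  define F where "F = (\<lambda>x. p (\<lambda>i. f i x) / q (\<lambda>i. f i x))"
  have "controlled_by m f F"
    unfolding F_def by (rule controlled_by_real_poly_fun_quotient[OF assms(2-5)])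
  then obtain L where L: "L \<ge> 0"
    "\<And>x y. x \<in> {0..1} \<Longrightarrow> y \<in> {0..1} \<Longrightarrow> \<bar>F x - F y\<bar> \<le> L * (\<Sum>i<m. \<bar>f i x - f i y\<bar>)"
    by (rule controlled_byE) blast
  have "real (cover_num \<delta> (graph01 F))
      \<le> (32 * L * real m + 8) * real (Max ((\<lambda>i. cover_num \<delta> (graph01 (f i))) ` {..<m}))"
    if "\<delta> > 0" for \<delta>
    using cover_num_graph_controlled_le[OF _ assms(2) L that] assms(1) by simp
  hence "upper_box_dim (graph01 F) \<le> Max ((\<lambda>i. upper_box_dim (graph01 (f i))) ` {..<m})"
    using assms(1) L(1)
    by (intro upper_box_dim_le_Max_if_cover_num_le[where K = "32 * L * real m + 8"])
      (auto simp: lessThan_empty_iff)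
  thus ?thesis unfolding F_def .
qed

end
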